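(* Let $q_1,\dots,q_5\in\widehat{\mathbb H}$ be five distinct points not lying on a single 2-sphere or 2-plane. Then any fractional linear transformation $T$ of $\widehat{\mathbb H}$ is uniquely determined by its values $T(q_n)$, $n=1,\dots,5$; i.e., if $T,T'$ are fractional linear transformations with $T(q_n)=T'(q_n)$ for $n=1,\dots,5$, then $T=T'$.
   Context: $\mathbb H$ denotes the quaternions (identified with $\mathbb R^4$), $\widehat{\mathbb H}=\mathbb H\cup\{\infty\}$. A fractional linear transformation of $\widehat{\mathbb H}$ is a map $q\mapsto(aq+b)(cq+d)^{-1}$ with $\begin{pmatrix}a&b\\c&d\end{pmatrix}\in GL(2,\mathbb H)$ invertible. *)

theory Defs
  imports "HOL-Analysis.Analysis"
begin

text \<open>Quaternions identified with R^4 (components 1,2,3,4 = real, i, j, k parts).\<close>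
type_synonym quat = "real^4"

definition qmul :: "quat \<Rightarrow> quat \<Rightarrow> quat" where
  "qmul x y = vector [
     x$1 * y$1 - x$2 * y$2 - x$3 * y$3 - x$4 * y$4,
     x$1 * y$2 + x$2 * y$1 + x$3 * y$4 - x$4 * y$3,
     x$1 * y$3 - x$2 * y$4 + x$3 * y$1 + x$4 * y$2,
     x$1 * y$4 + x$2 * y$3 - x$3 * y$2 + x$4 * y$1]"

definition qone :: quat where
  "qone = vector [1, 0, 0, 0]"

definition qconj :: "quat \<Rightarrow> quat" where
  "qconj x = vector [x$1, - x$2, - x$3, - x$4]"

text \<open>Multiplicative inverse (the value at 0 is irrelevant; it is 0).\<close>
definition qinv :: "quat \<Rightarrow> quat" where
  "qinv x = (1 / (norm x)\<^sup>2) *\<^sub>R qconj x"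

datatype hquat = Fin quat | Inf

definition gl2 :: "quat \<Rightarrow> quat \<Rightarrow> quat \<Rightarrow> quat \<Rightarrow> bool" where
  "gl2 a b c d \<longleftrightarrow> (\<exists>a' b' c' d'.
      qmul a a' + qmul b c' = qone \<and> qmul a b' + qmul b d' = 0 \<and>
      qmul c a' + qmul d c' = 0 \<and> qmul c b' + qmul d d' = qone \<and>
      qmul a' a + qmul b' c = qone \<and> qmul a' b + qmul b' d = 0 \<and>
      qmul c' a + qmul d' c = 0 \<and> qmul c' b + qmul d' d = qone)"

fun flt :: "quat \<Rightarrow> quat \<Rightarrow> quat \<Rightarrow> quat \<Rightarrow> hquat \<Rightarrow> hquat" where
  "flt a b c d (Fin q) =
     (if qmul c q + d = 0 then Inf else Fin (qmul (qmul a q + b) (qinv (qmul c q + d))))"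
| "flt a b c d Inf = (if c = 0 then Inf else Fin (qmul a (qinv c)))"

definition is_flt :: "(hquat \<Rightarrow> hquat) \<Rightarrow> bool" where
  "is_flt T \<longleftrightarrow> (\<exists>a b c d. gl2 a b c d \<and> T = flt a b c d)"

definition on_2sphere_or_2plane :: "hquat set \<Rightarrow> bool" where
  "on_2sphere_or_2plane S \<longleftrightarrow>
     (\<exists>c r A. r > 0 \<and> affine A \<and> aff_dim A = 3 \<and> c \<in> A \<and> S \<subseteq> Fin ` (sphere c r \<inter> A)) \<or>
     (\<exists>P. affine P \<and> aff_dim P = 2 \<and> S \<subseteq> insert Inf (Fin ` P))"

end

theory Submission
  imports Defs
begin

(*
  Write T = [a b; c d], T' = [A B; C D] and let N = [A B; C D]^-1 [a b; c d], a map of H^2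
  commuting with right scalar multiplication. A point p with T p = T' p is projectively fixed
  by N, so its homogeneous coordinate vector is a right eigenvector: N (hlift p) = hlift p * l.
  In the basis (q1, 1), (q2, 1) given by two finite points, N multiplies the two coordinates
  from the left by their eigenvalues l1 and l2. A third point, with coordinates (a, b) both
  nonzero, has an eigenvalue mu with l1 a = a mu and l2 b = b mu. If mu is real, then
  l1 = l2 = mu, N is a real scalar and T = T'. Otherwise every fixed point with coordinates
  (alpha, beta) makes a^-1 alpha conj(beta) conj(b)^-1 commute with mu. For a finite point q
  this reads L (q - q2) = |q - q2|^2 e with L real-linear, and since the commutators with a
  non-real quaternion span a plane, it amounts to two independent equations of the form
  lambda |q|^2 + u . q + c = 0: the points lie on a 2-sphere or a 2-plane.
*)

section \<open>Quaternion arithmetic\<close>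

lemma vector_4_nth [simp]:
  "(vector [a, b, c, d] :: real^4) $ 1 = a" "(vector [a, b, c, d] :: real^4) $ 2 = b"
  "(vector [a, b, c, d] :: real^4) $ 3 = c" "(vector [a, b, c, d] :: real^4) $ 4 = d"
  unfolding vector_def by simp_all

lemma quat_eq_iff: "(x::quat) = y \<longleftrightarrow> x$1 = y$1 \<and> x$2 = y$2 \<and> x$3 = y$3 \<and> x$4 = y$4"
  by (simp add: vec_eq_iff forall_4)

lemma qmul_nth [simp]:
  "qmul x y $ 1 = x$1 * y$1 - x$2 * y$2 - x$3 * y$3 - x$4 * y$4"
  "qmul x y $ 2 = x$1 * y$2 + x$2 * y$1 + x$3 * y$4 - x$4 * y$3"
  "qmul x y $ 3 = x$1 * y$3 - x$2 * y$4 + x$3 * y$1 + x$4 * y$2"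
  "qmul x y $ 4 = x$1 * y$4 + x$2 * y$3 - x$3 * y$2 + x$4 * y$1"
  by (simp_all add: qmul_def)

lemma qone_nth [simp]: "qone $ 1 = 1" "qone $ 2 = 0" "qone $ 3 = 0" "qone $ 4 = 0"
  by (simp_all add: qone_def)

lemma qconj_nth [simp]:
  "qconj x $ 1 = x$1" "qconj x $ 2 = - x$2" "qconj x $ 3 = - x$3" "qconj x $ 4 = - x$4"
  by (simp_all add: qconj_def)

lemma norm_quat_sq: "(norm (x::quat))\<^sup>2 = (x$1)\<^sup>2 + (x$2)\<^sup>2 + (x$3)\<^sup>2 + (x$4)\<^sup>2"
  unfolding power2_norm_eq_inner inner_vec_def sum_4 by (simp add: power2_eq_square)

lemma qmul_assoc: "qmul (qmul x y) z = qmul x (qmul y z)"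
  by (simp add: quat_eq_iff algebra_simps)

lemma qmul_add_left: "qmul (x + y) z = qmul x z + qmul y z"
  by (simp add: quat_eq_iff algebra_simps)

lemma qmul_add_right: "qmul z (x + y) = qmul z x + qmul z y"
  by (simp add: quat_eq_iff algebra_simps)

lemma qmul_diff_left: "qmul (x - y) z = qmul x z - qmul y z"
  by (simp add: quat_eq_iff algebra_simps)

lemma qmul_diff_right: "qmul z (x - y) = qmul z x - qmul z y"
  by (simp add: quat_eq_iff algebra_simps)

lemma qmul_minus [simp]: "qmul (- x) z = - qmul x z" "qmul z (- x) = - qmul z x"
  by (simp_all add: quat_eq_iff algebra_simps)

lemma qmul_scaleR [simp]: "qmul (r *\<^sub>R x) z = r *\<^sub>R qmul x z" "qmul z (r *\<^sub>R x) = r *\<^sub>R qmul z x"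
  by (simp_all add: quat_eq_iff algebra_simps)

lemma qmul_zero [simp]: "qmul 0 z = 0" "qmul z 0 = 0"
  by (simp_all add: quat_eq_iff)

lemma qmul_one [simp]: "qmul qone z = z" "qmul z qone = z"
  by (simp_all add: quat_eq_iff)

lemma qone_neq_zero [simp]: "qone \<noteq> 0"
  by (simp add: quat_eq_iff)

lemma qconj_qmul: "qconj (qmul x y) = qmul (qconj y) (qconj x)"
  by (simp add: quat_eq_iff algebra_simps)

lemma qconj_diff [simp]: "qconj (x - y) = qconj x - qconj y"
  by (simp add: quat_eq_iff)

lemma qconj_minus [simp]: "qconj (- x) = - qconj x"
  by (simp add: quat_eq_iff)

lemma qconj_zero [simp]: "qconj 0 = 0"
  by (simp add: quat_eq_iff)

lemma qconj_qone [simp]: "qconj qone = qone"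
  by (simp add: quat_eq_iff)

lemma qmul_qconj_right: "qmul x (qconj x) = (norm x)\<^sup>2 *\<^sub>R qone"
  unfolding norm_quat_sq by (simp add: quat_eq_iff algebra_simps power2_eq_square)

lemma qmul_qconj_left: "qmul (qconj x) x = (norm x)\<^sup>2 *\<^sub>R qone"
  unfolding norm_quat_sq by (simp add: quat_eq_iff algebra_simps power2_eq_square)

lemma norm_qmul: "norm (qmul x y) = norm x * norm y"
proof -
  have "(norm (qmul x y))\<^sup>2 = (norm x * norm y)\<^sup>2"
    unfolding power_mult_distrib norm_quat_sq by (simp add: algebra_simps power2_eq_square)
  then show ?thesis by simp
qed

lemma norm_qconj [simp]: "norm (qconj x) = norm x"
  by (metis norm_quat_sq power2_eq_iff_nonneg norm_ge_zero power2_minus qconj_nth)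

lemma qconj_eq_0_iff [simp]: "qconj x = 0 \<longleftrightarrow> x = 0"
  by (metis norm_eq_zero norm_qconj)

lemma qmul_eq_0_iff: "qmul x y = 0 \<longleftrightarrow> x = 0 \<or> y = 0"
  by (metis norm_eq_zero norm_qmul mult_eq_0_iff)

lemma qmul_qinv_right: "x \<noteq> 0 \<Longrightarrow> qmul x (qinv x) = qone"
  by (simp add: qinv_def qmul_qconj_right)

lemma qmul_qinv_left: "x \<noteq> 0 \<Longrightarrow> qmul (qinv x) x = qone"
  by (simp add: qinv_def qmul_qconj_left)

lemma qinv_eq_0_iff [simp]: "qinv x = 0 \<longleftrightarrow> x = 0"
  by (metis qinv_def qconj_eq_0_iff qmul_qinv_right qmul_zero(2) qone_neq_zero scaleR_zero_right)

lemma qmul_qinv_cancel_left: "x \<noteq> 0 \<Longrightarrow> qmul x (qmul (qinv x) z) = z"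
  by (simp add: qmul_assoc[symmetric] qmul_qinv_right)

lemma qinv_qmul_cancel_left: "x \<noteq> 0 \<Longrightarrow> qmul (qinv x) (qmul x z) = z"
  by (simp add: qmul_assoc[symmetric] qmul_qinv_left)

lemma qmul_left_cancel: "a \<noteq> 0 \<Longrightarrow> qmul a x = qmul a y \<longleftrightarrow> x = y"
  by (metis qinv_qmul_cancel_left)

lemma qmul_right_cancel: "a \<noteq> 0 \<Longrightarrow> qmul x a = qmul y a \<longleftrightarrow> x = y"
  by (metis qmul_assoc qmul_qinv_right qmul_one(2))

lemma qinv_qmul: "x \<noteq> 0 \<Longrightarrow> y \<noteq> 0 \<Longrightarrow> qinv (qmul x y) = qmul (qinv y) (qinv x)"
  by (metis qmul_assoc qmul_eq_0_iff qinv_qmul_cancel_left qmul_qinv_right qmul_one(2))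

section \<open>Sets cut out by two independent quadrics\<close>

lemma completing_square:
  fixes q u :: "'a::real_inner"
  assumes "a \<noteq> 0"
  shows "a * (norm q)\<^sup>2 + u \<bullet> q + b
       = a * (norm (q + (1 / (2 * a)) *\<^sub>R u))\<^sup>2 + (b - (norm u)\<^sup>2 / (4 * a))"
  using assms
  by (simp add: power2_norm_eq_inner inner_add_left inner_add_right inner_commute field_simps)

lemma hyperplane_foot:
  fixes w c0 :: "'a::real_inner"
  assumes "w \<noteq> 0"
  obtains c where "w \<bullet> c = \<beta>"
    and "\<And>q. w \<bullet> q = \<beta> \<Longrightarrow> (norm (q - c0))\<^sup>2 = (norm (q - c))\<^sup>2 + (norm (c - c0))\<^sup>2"
proof
  define c where "c = c0 + ((\<beta> - w \<bullet> c0) / (norm w)\<^sup>2) *\<^sub>R w"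
  show wc: "w \<bullet> c = \<beta>"
    using assms by (simp add: c_def inner_add_right power2_norm_eq_inner)
  fix q assume "w \<bullet> q = \<beta>"
  then have "w \<bullet> (q - c) = 0"
    using wc by (simp add: inner_diff_right)
  then have "orthogonal (q - c) (c - c0)"
    by (simp add: c_def orthogonal_def inner_commute)
  then show "(norm (q - c0))\<^sup>2 = (norm (q - c))\<^sup>2 + (norm (c - c0))\<^sup>2"
    using norm_add_Pythagorean by fastforce
qed

lemma aff_dim_two_hyperplanes:
  fixes u1 u2 :: "'a::euclidean_space"
  assumes indep: "\<And>s1 s2. s1 *\<^sub>R u1 + s2 *\<^sub>R u2 = 0 \<Longrightarrow> s1 = 0 \<and> s2 = 0"
    and x: "u1 \<bullet> x = b1" "u2 \<bullet> x = b2"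
  shows "aff_dim {z. u1 \<bullet> z = b1 \<and> u2 \<bullet> z = b2} = int DIM('a) - 2"
proof -
  have ns: "u1 \<notin> span {u2}"
  proof
    assume "u1 \<in> span {u2}"
    then obtain k where "u1 = k *\<^sub>R u2" by (auto simp: span_singleton)
    then show False using indep[of 1 "-k"] by simp
  qed
  moreover have "u1 \<noteq> u2" "u2 \<noteq> 0"
    using indep[of 1 "-1"] indep[of 0 1] by auto
  ultimately have "independent {u1, u2}" "card {u1, u2} = 2"
    by (simp_all add: independent_insert)
  then have "dim (span {u1, u2}) = 2"
    by (simp add: dim_eq_card_independent)
  moreover define V where "V = {z. u1 \<bullet> z = 0 \<and> u2 \<bullet> z = 0}"
  have "V = {z. \<forall>y \<in> span {u1, u2}. orthogonal y z}"
  proof (intro set_eqI iffI)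
    fix z assume "z \<in> V"
    then show "z \<in> {z. \<forall>y \<in> span {u1, u2}. orthogonal y z}"
      using orthogonal_to_span[of _ "{u1, u2}" z]
      by (auto simp: V_def orthogonal_def inner_commute)
  qed (auto simp: V_def orthogonal_def span_base)
  ultimately have "dim V + 2 = DIM('a)"
    using dim_subspace_orthogonal_to_vectors[of "span {u1, u2}" UNIV]
    by simp
  moreover have "{z. u1 \<bullet> z = b1 \<and> u2 \<bullet> z = b2} = (+) x ` V"
  proof (intro set_eqI iffI)
    fix z assume "z \<in> {z. u1 \<bullet> z = b1 \<and> u2 \<bullet> z = b2}"
    then have "z - x \<in> V" using x by (simp add: V_def inner_diff_right)
    then show "z \<in> (+) x ` V" by (metis add.commute diff_add_cancel image_eqI)
  qed (use x in \<open>auto simp: V_def inner_add_right\<close>)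
  moreover have "subspace V"
    unfolding V_def subspace_def by (simp add: inner_add_right)
  ultimately show ?thesis
    by (simp add: aff_dim_translation_eq aff_dim_subspace)
qed

lemma on_2sphere_or_2planeI_sphere:
  fixes S :: "hquat set"
  assumes w: "w \<noteq> 0" and "Inf \<notin> S" and xy: "Fin x \<in> S" "Fin y \<in> S" "x \<noteq> y"
    and on: "\<And>q. Fin q \<in> S \<Longrightarrow> (norm (q - c0))\<^sup>2 = R \<and> w \<bullet> q = \<beta>"
  shows "on_2sphere_or_2plane S"
proof -
  obtain c where c: "w \<bullet> c = \<beta>"
    and pyth: "\<And>q. w \<bullet> q = \<beta> \<Longrightarrow> (norm (q - c0))\<^sup>2 = (norm (q - c))\<^sup>2 + (norm (c - c0))\<^sup>2"
    using hyperplane_foot[OF w] by blast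
  define \<rho> where "\<rho> = R - (norm (c - c0))\<^sup>2"
  have on_c: "(norm (q - c))\<^sup>2 = \<rho> \<and> w \<bullet> q = \<beta>" if "Fin q \<in> S" for q
    using on[OF that] pyth unfolding \<rho>_def by force
  have "\<rho> > 0"
  proof (rule ccontr)
    assume "\<not> \<rho> > 0"
    then have "(norm (x - c))\<^sup>2 \<le> 0" "(norm (y - c))\<^sup>2 \<le> 0"
      using on_c[OF xy(1)] on_c[OF xy(2)] by auto
    then have "x = c" "y = c" by simp_all
    with xy(3) show False by simp
  qed
  have "S \<subseteq> Fin ` (sphere c (sqrt \<rho>) \<inter> {z. w \<bullet> z = \<beta>})"
  proof
    fix p assume "p \<in> S"
    with \<open>Inf \<notin> S\<close> obtain q where q: "p = Fin q" "Fin q \<in> S" by (cases p) auto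
    then have "dist c q = sqrt \<rho>"
      using on_c[OF q(2)] by (metis dist_commute dist_norm norm_ge_zero real_sqrt_unique)
    with q on_c show "p \<in> Fin ` (sphere c (sqrt \<rho>) \<inter> {z. w \<bullet> z = \<beta>})" by auto
  qed
  then show ?thesis
    unfolding on_2sphere_or_2plane_def using w c \<open>\<rho> > 0\<close>
    by (intro disjI1 exI[of _ c] exI[of _ "sqrt \<rho>"] exI[of _ "{z. w \<bullet> z = \<beta>}"])
      (simp add: affine_hyperplane)
qed

lemma on_2sphere_or_2planeI_plane:
  fixes S :: "hquat set"
  assumes indep: "\<And>s1 s2. s1 *\<^sub>R u1 + s2 *\<^sub>R u2 = 0 \<Longrightarrow> s1 = 0 \<and> s2 = 0"
    and "Fin x \<in> S"
    and on: "\<And>q. Fin q \<in> S \<Longrightarrow> u1 \<bullet> q = b1 \<and> u2 \<bullet> q = b2"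
  shows "on_2sphere_or_2plane S"
proof -
  define P where "P = {z. u1 \<bullet> z = b1 \<and> u2 \<bullet> z = b2}"
  have "aff_dim P = 2"
    using aff_dim_two_hyperplanes[of u1 u2 x b1 b2] indep on[OF \<open>Fin x \<in> S\<close>]
    by (simp add: P_def)
  moreover have "affine P"
    using affine_Int[OF affine_hyperplane affine_hyperplane] by (simp add: P_def Collect_conj_eq)
  moreover have "S \<subseteq> insert Inf (Fin ` P)"
  proof
    fix p assume "p \<in> S"
    then show "p \<in> insert Inf (Fin ` P)" using on by (cases p) (auto simp: P_def)
  qed
  ultimately show ?thesis
    unfolding on_2sphere_or_2plane_def by blast
qed

lemma on_2sphere_or_2plane_if_two_quadrics:
  fixes S :: "hquat set"
  assumes xy: "Fin x \<in> S" "Fin y \<in> S" "x \<noteq> y"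
    and on: "\<And>q. Fin q \<in> S \<Longrightarrow>
              a1 * (norm q)\<^sup>2 + u1 \<bullet> q + b1 = 0 \<and> a2 * (norm q)\<^sup>2 + u2 \<bullet> q + b2 = 0"
    and Inf: "Inf \<in> S \<Longrightarrow> a1 = 0 \<and> a2 = 0"
    and indep: "\<And>s1 s2. \<forall>q. s1 * (a1 * (norm q)\<^sup>2 + u1 \<bullet> q + b1)
                            + s2 * (a2 * (norm q)\<^sup>2 + u2 \<bullet> q + b2) = 0 \<Longrightarrow> s1 = 0 \<and> s2 = 0"
  shows "on_2sphere_or_2plane S"
proof (cases "a1 = 0 \<and> a2 = 0")
  case True
  have "s1 = 0 \<and> s2 = 0" if "s1 *\<^sub>R u1 + s2 *\<^sub>R u2 = 0" for s1 s2
  proof -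
    have const: "s1 * (u1 \<bullet> q + b1) + s2 * (u2 \<bullet> q + b2) = s1 * b1 + s2 * b2" for q
      using arg_cong[OF that, of "\<lambda>v. v \<bullet> q"] by (simp add: algebra_simps)
    moreover have "s1 * b1 + s2 * b2 = 0"
      using const[of x] on[OF xy(1)] True by simp
    ultimately show ?thesis using indep[of s1 s2] True by simp
  qed
  then show ?thesis
    using on True by (intro on_2sphere_or_2planeI_plane[OF _ xy(1), of u1 u2 "- b1" "- b2"]) force+
next
  case False
  \<comment> \<open>For the two quadrics \<open>Q1\<close>, \<open>Q2\<close>: \<open>a1 Q2 - a2 Q1\<close> is affine, so it cuts out a hyperplane,
    and \<open>a1 Q1 + a2 Q2\<close> has leading coefficient \<open>a1\<^sup>2 + a2\<^sup>2 \<noteq> 0\<close>, so it cuts out a sphere.\<close>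
  define w where "w = a1 *\<^sub>R u2 - a2 *\<^sub>R u1"
  define A where "A = a1\<^sup>2 + a2\<^sup>2"
  define u where "u = a1 *\<^sub>R u1 + a2 *\<^sub>R u2"
  define b where "b = a1 * b1 + a2 * b2"
  have A: "A \<noteq> 0"
    using False by (simp add: A_def add_nonneg_eq_0_iff)
  have diff: "a1 * (a2 * (norm q)\<^sup>2 + u2 \<bullet> q + b2) - a2 * (a1 * (norm q)\<^sup>2 + u1 \<bullet> q + b1)
      = w \<bullet> q + (a1 * b2 - a2 * b1)" for q
    by (simp add: w_def algebra_simps)
  have "w \<noteq> 0"
  proof
    assume "w = 0"
    then have "a1 * b2 - a2 * b1 = 0"
      using diff[of x] on[OF xy(1)] by simp
    then show False
      using indep[of "- a2" a1] diff \<open>w = 0\<close> False by (simp add: algebra_simps)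
  qed
  moreover have "(norm (q + (1 / (2 * A)) *\<^sub>R u))\<^sup>2 = ((norm u)\<^sup>2 / (4 * A) - b) / A
      \<and> w \<bullet> q = a2 * b1 - a1 * b2" if "Fin q \<in> S" for q
  proof -
    have "A * (norm q)\<^sup>2 + u \<bullet> q + b
        = a1 * (a1 * (norm q)\<^sup>2 + u1 \<bullet> q + b1) + a2 * (a2 * (norm q)\<^sup>2 + u2 \<bullet> q + b2)"
      by (simp add: A_def u_def b_def algebra_simps power2_eq_square)
    then have "A * (norm q)\<^sup>2 + u \<bullet> q + b = 0"
      using on[OF that] by simp
    then have "(norm (q + (1 / (2 * A)) *\<^sub>R u))\<^sup>2 = ((norm u)\<^sup>2 / (4 * A) - b) / A"
      using completing_square[OF A, of q u b] A by (simp add: field_simps)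
    moreover have "w \<bullet> q = a2 * b1 - a1 * b2"
      using diff[of q] on[OF that] by simp
    ultimately show ?thesis by simp
  qed
  moreover have "Inf \<notin> S"
    using Inf False by blast
  ultimately show ?thesis
    using xy by (intro on_2sphere_or_2planeI_sphere[of w S x y "- ((1 / (2 * A)) *\<^sub>R u)"]) simp_all
qed

lemma on_2sphere_or_2plane_if_quadratic_relation:
  fixes L :: "quat \<Rightarrow> 'b::euclidean_space"
  assumes L: "linear L"
    and xy: "Fin x \<in> S" "Fin y \<in> S" "x \<noteq> y"
    and rel: "\<And>q. Fin q \<in> S \<Longrightarrow> L (q - q0) = (norm (q - q0))\<^sup>2 *\<^sub>R e"
    and Inf: "Inf \<in> S \<Longrightarrow> e = 0"
    and g: "g1 \<in> range L" "g2 \<in> range L"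
    and indep: "\<And>s1 s2. s1 *\<^sub>R g1 + s2 *\<^sub>R g2 = 0 \<Longrightarrow> s1 = 0 \<and> s2 = 0"
  shows "on_2sphere_or_2plane S"
proof -
  \<comment> \<open>Each \<open>g\<close> gives a quadric \<open>F g\<close> vanishing on \<open>S\<close>; its odd part about \<open>q0\<close> is
    \<open>2 (g \<bullet> L t)\<close>, which keeps the quadrics of independent \<open>g \<in> range L\<close> independent.\<close>
  define F where "F g q = g \<bullet> L (q - q0) - (norm (q - q0))\<^sup>2 * (g \<bullet> e)" for g q
  define a where "a g = - (g \<bullet> e)" for g
  define u where "u g = adjoint L g + (2 * (g \<bullet> e)) *\<^sub>R q0" for g
  define b where "b g = - (q0 \<bullet> adjoint L g) - (g \<bullet> e) * (norm q0)\<^sup>2" for g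
  have F_quadric: "F g q = a g * (norm q)\<^sup>2 + u g \<bullet> q + b g" for g q
  proof -
    have "g \<bullet> L (q - q0) = (q - q0) \<bullet> adjoint L g"
      by (simp add: adjoint_works[OF L] inner_commute)
    then show ?thesis
      by (simp add: F_def a_def u_def b_def power2_norm_eq_inner inner_commute algebra_simps)
  qed
  have F_comb: "s1 * F g1 q + s2 * F g2 q = F (s1 *\<^sub>R g1 + s2 *\<^sub>R g2) q" for s1 s2 q
    by (simp add: F_def algebra_simps)
  have F_odd: "F g (q0 + t) - F g (q0 - t) = 2 * (g \<bullet> L t)" for g t
    by (simp add: F_def linear_neg[OF L])
  show ?thesis
  proof (rule on_2sphere_or_2plane_if_two_quadrics
      [of x S y "a g1" "u g1" "b g1" "a g2" "u g2" "b g2", OF xy])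
    fix q assume "Fin q \<in> S"
    then have "F g q = 0" for g
      using rel by (simp add: F_def)
    then show "a g1 * (norm q)\<^sup>2 + u g1 \<bullet> q + b g1 = 0 \<and> a g2 * (norm q)\<^sup>2 + u g2 \<bullet> q + b g2 = 0"
      by (simp add: F_quadric[symmetric])
  next
    show "Inf \<in> S \<Longrightarrow> a g1 = 0 \<and> a g2 = 0"
      using Inf by (simp add: a_def)
  next
    fix s1 s2
    assume comb: "\<forall>q. s1 * (a g1 * (norm q)\<^sup>2 + u g1 \<bullet> q + b g1) + s2 * (a g2 * (norm q)\<^sup>2 + u g2 \<bullet> q + b g2) = 0"
    then have "F (s1 *\<^sub>R g1 + s2 *\<^sub>R g2) q = 0" for q
      using F_comb[of s1 q s2] comb unfolding F_quadric by simp
    then have orth: "(s1 *\<^sub>R g1 + s2 *\<^sub>R g2) \<bullet> L t = 0" for t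
      using F_odd[of "s1 *\<^sub>R g1 + s2 *\<^sub>R g2" t] by simp
    obtain t1 t2 where "g1 = L t1" "g2 = L t2"
      using g by blast
    then have "s1 *\<^sub>R g1 + s2 *\<^sub>R g2 = L (s1 *\<^sub>R t1 + s2 *\<^sub>R t2)"
      by (simp add: linear_add[OF L] linear_scale[OF L])
    then have "s1 *\<^sub>R g1 + s2 *\<^sub>R g2 = 0"
      using orth by (metis inner_eq_zero_iff)
    then show "s1 = 0 \<and> s2 = 0"
      by (rule indep)
  qed
qed

section \<open>Commutators\<close>

definition qcomm :: "quat \<Rightarrow> quat \<Rightarrow> quat" where
  "qcomm m s = qmul m s - qmul s m"

lemma qcomm_independent_pair:
  assumes "\<And>r. \<mu> \<noteq> r *\<^sub>R qone"
  obtains s1 s2 where "\<And>x1 x2. x1 *\<^sub>R qcomm \<mu> s1 + x2 *\<^sub>R qcomm \<mu> s2 = 0 \<Longrightarrow> x1 = 0 \<and> x2 = 0"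
proof -
  define i :: quat where "i = vector [0, 1, 0, 0]"
  define j :: quat where "j = vector [0, 0, 1, 0]"
  define k :: quat where "k = vector [0, 0, 0, 1]"
  have "\<mu>$2 \<noteq> 0 \<or> \<mu>$3 \<noteq> 0 \<or> \<mu>$4 \<noteq> 0"
    using assms[of "\<mu>$1"] by (auto simp: quat_eq_iff)
  then consider "\<mu>$4 \<noteq> 0" | "\<mu>$3 \<noteq> 0" | "\<mu>$2 \<noteq> 0" by blast
  then show ?thesis
  proof cases
    case 1
    then show ?thesis by (intro that[of i j]) (auto simp: quat_eq_iff qcomm_def i_def j_def)
  next
    case 2
    then show ?thesis by (intro that[of i k]) (auto simp: quat_eq_iff qcomm_def i_def k_def)
  next
    case 3
    then show ?thesis by (intro that[of j k]) (auto simp: quat_eq_iff qcomm_def j_def k_def)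
  qed
qed

lemma linear_qcomm_sandwich: "linear (\<lambda>t. qcomm \<mu> (qmul A (qmul t C)))"
  by (rule linearI) (simp_all add: qcomm_def qmul_add_left qmul_add_right algebra_simps)

lemma qcomm_in_range_sandwich:
  assumes "A \<noteq> 0" "C \<noteq> 0"
  shows "qcomm \<mu> s \<in> range (\<lambda>t. qcomm \<mu> (qmul A (qmul t C)))"
proof
  show "qcomm \<mu> s = qcomm \<mu> (qmul A (qmul (qmul (qinv A) (qmul s (qinv C))) C))"
    using assms by (simp add: qmul_assoc qmul_qinv_cancel_left qmul_qinv_left)
qed simp

lemma qconj_intertwines:
  assumes "qmul \<mu> w = qmul w l"
  shows "qmul l (qconj w) = qmul (qconj w) \<mu>"
proof -
  have "(norm w)\<^sup>2 *\<^sub>R qmul l (qconj w) = qmul (qmul (qconj w) (qmul \<mu> w)) (qconj w)"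
    by (simp add: assms qmul_assoc[symmetric] qmul_qconj_left)
  also have "\<dots> = (norm w)\<^sup>2 *\<^sub>R qmul (qconj w) \<mu>"
    by (simp add: qmul_assoc qmul_qconj_right)
  finally show ?thesis
    by (cases "w = 0") simp_all
qed

lemma qcomm_intertwiner_product:
  assumes "qmul \<mu> z = qmul z l" "qmul \<mu> w = qmul w l"
  shows "qcomm \<mu> (qmul z (qconj w)) = 0"
  using qconj_intertwines[OF assms(2)] assms(1)
  by (simp add: qcomm_def qmul_assoc[symmetric]) (simp add: qmul_assoc)

lemma intertwiner_qinv_qmul:
  assumes "a \<noteq> 0" "qmul l1 a = qmul a \<mu>" "qmul l1 \<alpha> = qmul \<alpha> l"
  shows "qmul \<mu> (qmul (qinv a) \<alpha>) = qmul (qmul (qinv a) \<alpha>) l"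
proof -
  have "qmul \<mu> (qinv a) = qmul (qinv a) l1"
    using assms(1,2) by (metis qmul_assoc qinv_qmul_cancel_left qmul_qinv_right qmul_one(2))
  then show ?thesis
    using assms(3) by (metis qmul_assoc)
qed

section \<open>Homogeneous coordinates\<close>

definition rscale :: "quat \<times> quat \<Rightarrow> quat \<Rightarrow> quat \<times> quat" where
  "rscale v k = (qmul (fst v) k, qmul (snd v) k)"

fun hlift :: "hquat \<Rightarrow> quat \<times> quat" where
  "hlift (Fin q) = (q, qone)"
| "hlift Inf = (qone, 0)"

fun hproj :: "quat \<times> quat \<Rightarrow> hquat" where
  "hproj (x, y) = (if y = 0 then Inf else Fin (qmul x (qinv y)))"

definition mat_act :: "quat \<Rightarrow> quat \<Rightarrow> quat \<Rightarrow> quat \<Rightarrow> quat \<times> quat \<Rightarrow> quat \<times> quat" where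
  "mat_act a b c d v = (qmul a (fst v) + qmul b (snd v), qmul c (fst v) + qmul d (snd v))"

definition right_linear :: "(quat \<times> quat \<Rightarrow> quat \<times> quat) \<Rightarrow> bool" where
  "right_linear N \<longleftrightarrow> (\<forall>v w. N (v + w) = N v + N w) \<and> (\<forall>v k. N (rscale v k) = rscale (N v) k)"

lemma rscale_rscale: "rscale (rscale v k) k' = rscale v (qmul k k')"
  by (simp add: rscale_def qmul_assoc)

lemma rscale_qone [simp]: "rscale v qone = v"
  by (simp add: rscale_def)

lemma hlift_nonzero: "hlift p \<noteq> 0"
  by (cases p) (simp_all add: zero_prod_def)

lemma flt_eq_hproj: "flt a b c d p = hproj (mat_act a b c d (hlift p))"
  by (cases p) (simp_all add: mat_act_def)

lemma mat_act_mat_act: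
  "mat_act a' b' c' d' (mat_act a b c d v) =
   mat_act (qmul a' a + qmul b' c) (qmul a' b + qmul b' d) (qmul c' a + qmul d' c) (qmul c' b + qmul d' d) v"
  by (simp add: mat_act_def qmul_add_left qmul_add_right qmul_assoc add_ac)

lemma mat_act_identity [simp]: "mat_act qone 0 0 qone v = v"
  by (simp add: mat_act_def)

lemma mat_act_zero [simp]: "mat_act a b c d 0 = 0"
  by (simp add: mat_act_def zero_prod_def)

lemma right_linear_mat_act: "right_linear (mat_act a b c d)"
  by (simp add: right_linear_def mat_act_def rscale_def qmul_add_left qmul_add_right qmul_assoc)

lemma right_linear_comp: "right_linear M \<Longrightarrow> right_linear M' \<Longrightarrow> right_linear (\<lambda>v. M' (M v))"
  unfolding right_linear_def by metis

lemma hproj_rscale: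
  assumes "k \<noteq> 0"
  shows "hproj (rscale v k) = hproj v"
proof (cases v)
  case (Pair x y)
  then show ?thesis
    using assms by (simp add: rscale_def qmul_eq_0_iff qinv_qmul qmul_assoc qmul_qinv_cancel_left)
qed

lemma hproj_eq_imp_rscale:
  assumes "u \<noteq> 0" "u' \<noteq> 0" "hproj u = hproj u'"
  obtains k where "k \<noteq> 0" "u' = rscale u k"
proof (cases u, cases u')
  fix x y x' y' assume u: "u = (x, y)" and u': "u' = (x', y')"
  show ?thesis
  proof (cases "y = 0")
    case True
    then have "y' = 0" "x \<noteq> 0" "x' \<noteq> 0"
      using assms u u' by (auto simp: zero_prod_def split: if_splits)
    then show ?thesis
      using True by (intro that[of "qmul (qinv x) x'"])
        (simp_all add: u u' rscale_def qmul_eq_0_iff qmul_qinv_cancel_left)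
  next
    case False
    then have "y' \<noteq> 0" and "qmul x (qinv y) = qmul x' (qinv y')"
      using assms(3) u u' by (auto split: if_splits)
    then have "x' = qmul x (qmul (qinv y) y')"
      by (metis qmul_assoc qmul_qinv_left qmul_one(2))
    then show ?thesis
      using False \<open>y' \<noteq> 0\<close> by (intro that[of "qmul (qinv y) y'"])
        (simp_all add: u u' rscale_def qmul_eq_0_iff qmul_qinv_cancel_left)
  qed
qed

lemma gl2_inverse:
  assumes "gl2 a b c d"
  obtains a' b' c' d' where "\<And>v. mat_act a' b' c' d' (mat_act a b c d v) = v"
    and "\<And>v. mat_act a b c d (mat_act a' b' c' d' v) = v"
proof -
  obtain a' b' c' d' where
      "qmul a a' + qmul b c' = qone" "qmul a b' + qmul b d' = 0"
      "qmul c a' + qmul d c' = 0" "qmul c b' + qmul d d' = qone"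
      "qmul a' a + qmul b' c = qone" "qmul a' b + qmul b' d = 0"
      "qmul c' a + qmul d' c = 0" "qmul c' b + qmul d' d = qone"
    using assms unfolding gl2_def by blast
  then show ?thesis
    by (intro that[of a' b' c' d']) (simp_all add: mat_act_mat_act)
qed

lemma eigen_if_hproj_eq:
  assumes "right_linear M'" "\<And>v. M' (M0 v) = v"
    and "M u \<noteq> 0" "M0 u \<noteq> 0" "hproj (M u) = hproj (M0 u)"
  obtains l where "M' (M u) = rscale u l"
proof -
  obtain k where k: "k \<noteq> 0" "M0 u = rscale (M u) k"
    using hproj_eq_imp_rscale assms(3-5) by blast
  then have "u = rscale (M' (M u)) k"
    using assms(1,2) by (metis right_linear_def)
  then have "rscale u (qinv k) = rscale (rscale (M' (M u)) k) (qinv k)"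
    by simp
  also have "\<dots> = M' (M u)"
    using k(1) by (simp add: rscale_rscale qmul_qinv_right)
  finally have "M' (M u) = rscale u (qinv k)"
    by (rule sym)
  then show ?thesis
    by (rule that)
qed

section \<open>Coordinates with respect to two finite points\<close>

definition frame :: "quat \<Rightarrow> quat \<Rightarrow> quat \<Rightarrow> quat \<Rightarrow> quat \<times> quat" where
  "frame q1 q2 \<alpha> \<beta> = (qmul q1 \<alpha> + qmul q2 \<beta>, \<alpha> + \<beta>)"

lemma frame_eq_rscale_sum:
  "frame q1 q2 \<alpha> \<beta> = rscale (hlift (Fin q1)) \<alpha> + rscale (hlift (Fin q2)) \<beta>"
  by (simp add: frame_def rscale_def)

lemma rscale_frame: "rscale (frame q1 q2 \<alpha> \<beta>) l = frame q1 q2 (qmul \<alpha> l) (qmul \<beta> l)"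
  by (simp add: frame_def rscale_def qmul_add_left qmul_assoc)

lemma frame_inject:
  assumes "q1 \<noteq> q2"
  shows "frame q1 q2 \<alpha> \<beta> = frame q1 q2 \<alpha>' \<beta>' \<longleftrightarrow> \<alpha> = \<alpha>' \<and> \<beta> = \<beta>'"
proof
  assume eq: "frame q1 q2 \<alpha> \<beta> = frame q1 q2 \<alpha>' \<beta>'"
  then have sum: "\<alpha> + \<beta> = \<alpha>' + \<beta>'"
    by (simp add: frame_def)
  have "qmul (q1 - q2) \<alpha> = qmul q1 \<alpha> + qmul q2 \<beta> - qmul q2 (\<alpha> + \<beta>)"
    by (simp add: qmul_diff_left qmul_add_right)
  also have "\<dots> = qmul (q1 - q2) \<alpha>'"
    using eq sum by (simp add: frame_def qmul_diff_left qmul_add_right)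
  finally have "\<alpha> = \<alpha>'"
    using assms by (simp add: qmul_left_cancel)
  with sum show "\<alpha> = \<alpha>' \<and> \<beta> = \<beta>'" by simp
qed simp

lemma frame_surj:
  assumes "q1 \<noteq> q2"
  obtains \<alpha> \<beta> where "v = frame q1 q2 \<alpha> \<beta>"
proof
  define \<alpha> where "\<alpha> = qmul (qinv (q1 - q2)) (fst v - qmul q2 (snd v))"
  have "qmul q1 \<alpha> + qmul q2 (snd v - \<alpha>) = qmul (q1 - q2) \<alpha> + qmul q2 (snd v)"
    by (simp add: qmul_diff_left qmul_diff_right)
  also have "\<dots> = fst v"
    using assms by (simp add: \<alpha>_def qmul_qinv_cancel_left)
  finally show "v = frame q1 q2 \<alpha> (snd v - \<alpha>)"
    by (simp add: frame_def prod_eq_iff)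
qed

lemma hlift_Fin_frame:
  assumes "q1 \<noteq> q2"
  shows "hlift (Fin q) = frame q1 q2 (qmul (qinv (q1 - q2)) (q - q2)) (qone - qmul (qinv (q1 - q2)) (q - q2))"
proof -
  have "qmul q1 \<alpha> + qmul q2 (qone - \<alpha>) = qmul (q1 - q2) \<alpha> + q2" for \<alpha>
    by (simp add: qmul_diff_left qmul_diff_right)
  then show ?thesis
    using assms by (simp add: frame_def qmul_qinv_cancel_left)
qed

lemma hlift_Inf_frame:
  assumes "q1 \<noteq> q2"
  shows "hlift Inf = frame q1 q2 (qinv (q1 - q2)) (- qinv (q1 - q2))"
  using assms by (simp add: frame_def qmul_diff_left[symmetric] qmul_qinv_right)

lemma hlift_frame_nonzero_coords:
  assumes "q1 \<noteq> q2" "p \<noteq> Fin q1" "p \<noteq> Fin q2"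
  obtains \<alpha> \<beta> where "hlift p = frame q1 q2 \<alpha> \<beta>" "\<alpha> \<noteq> 0" "\<beta> \<noteq> 0"
proof -
  obtain \<alpha> \<beta> where v: "hlift p = frame q1 q2 \<alpha> \<beta>"
    using frame_surj[OF assms(1)] by blast
  moreover have "\<alpha> \<noteq> 0 \<and> \<beta> \<noteq> 0"
    using v assms by (cases p) (auto simp: frame_def)
  ultimately show ?thesis using that by blast
qed

section \<open>Maps with many eigen-points\<close>

lemma right_linear_diagonal_in_frame:
  assumes "right_linear N"
    and "N (hlift (Fin q1)) = rscale (hlift (Fin q1)) l1"
    and "N (hlift (Fin q2)) = rscale (hlift (Fin q2)) l2"
  shows "N (frame q1 q2 \<alpha> \<beta>) = frame q1 q2 (qmul l1 \<alpha>) (qmul l2 \<beta>)"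
proof -
  have "N (frame q1 q2 \<alpha> \<beta>) = rscale (N (hlift (Fin q1))) \<alpha> + rscale (N (hlift (Fin q2))) \<beta>"
    using assms(1) unfolding right_linear_def frame_eq_rscale_sum by metis
  then show ?thesis
    using assms(2,3) by (simp add: frame_eq_rscale_sum rscale_rscale)
qed

lemma on_2sphere_or_2plane_if_frame_commutation:
  assumes q12: "q1 \<noteq> q2" and S: "Fin q1 \<in> S" "Fin q2 \<in> S"
    and "A \<noteq> 0" "C \<noteq> 0" and nonreal: "\<And>r. \<mu> \<noteq> r *\<^sub>R qone"
    and comm: "\<And>p \<alpha> \<beta>. p \<in> S \<Longrightarrow> hlift p = frame q1 q2 \<alpha> \<beta> \<Longrightarrow>
                 qcomm \<mu> (qmul A (qmul (qmul \<alpha> (qconj \<beta>)) C)) = 0"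
  shows "on_2sphere_or_2plane S"
proof -
  define d where "d = qinv (q1 - q2)"
  define K where "K x = qcomm \<mu> (qmul A (qmul x C))" for x
  define L where "L t = qcomm \<mu> (qmul (qmul A d) (qmul t C))" for t
  have d: "d \<noteq> 0" "qmul A d \<noteq> 0"
    using q12 \<open>A \<noteq> 0\<close> by (simp_all add: d_def qmul_eq_0_iff)
  have K: "linear K" and L: "linear L"
    unfolding K_def L_def by (rule linear_qcomm_sandwich)+
  have L_K: "L t = K (qmul d t)" for t
    by (simp add: L_def K_def qmul_assoc)
  have rel: "L (q - q2) = (norm (q - q2))\<^sup>2 *\<^sub>R ((norm d)\<^sup>2 *\<^sub>R K qone)" if "Fin q \<in> S" for q
  proof -
    define \<alpha> where "\<alpha> = qmul d (q - q2)"
    have "K (qmul \<alpha> (qconj (qone - \<alpha>))) = 0"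
      using comm[OF that hlift_Fin_frame[OF q12]] by (simp add: K_def \<alpha>_def d_def)
    moreover have "qmul \<alpha> (qconj (qone - \<alpha>)) = \<alpha> - (norm \<alpha>)\<^sup>2 *\<^sub>R qone"
      by (simp add: qmul_diff_right qmul_qconj_right)
    ultimately have "K \<alpha> = (norm \<alpha>)\<^sup>2 *\<^sub>R K qone"
      by (simp add: linear_diff[OF K] linear_scale[OF K])
    then show ?thesis
      by (simp add: L_K \<alpha>_def norm_qmul power_mult_distrib)
  qed
  have inf: "(norm d)\<^sup>2 *\<^sub>R K qone = 0" if "Inf \<in> S"
  proof -
    have "K (qmul d (qconj (- d))) = 0"
      using comm[OF that hlift_Inf_frame[OF q12]] by (simp add: K_def d_def)
    then show ?thesis
      by (simp add: qmul_qconj_right linear_neg[OF K] linear_scale[OF K])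
  qed
  obtain s1 s2 where indep: "\<And>x1 x2. x1 *\<^sub>R qcomm \<mu> s1 + x2 *\<^sub>R qcomm \<mu> s2 = 0 \<Longrightarrow> x1 = 0 \<and> x2 = 0"
    using qcomm_independent_pair[OF nonreal] by blast
  have "qcomm \<mu> s1 \<in> range L" "qcomm \<mu> s2 \<in> range L"
    unfolding L_def using qcomm_in_range_sandwich[OF d(2) \<open>C \<noteq> 0\<close>] by blast+
  then show ?thesis
    using on_2sphere_or_2plane_if_quadratic_relation[OF L S q12 rel inf _ _ indep] by blast
qed

lemma right_linear_scalar_if_eigen:
  assumes N: "right_linear N" and inj: "\<And>v. N v = 0 \<Longrightarrow> v = 0"
    and q12: "q1 \<noteq> q2" and S: "Fin q1 \<in> S" "Fin q2 \<in> S" "p3 \<in> S" "p3 \<noteq> Fin q1" "p3 \<noteq> Fin q2"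
    and eigen: "\<And>p. p \<in> S \<Longrightarrow> \<exists>l. N (hlift p) = rscale (hlift p) l"
    and nsph: "\<not> on_2sphere_or_2plane S"
  obtains k where "k \<noteq> 0" "\<And>v. N v = rscale v k"
proof -
  obtain l1 l2 where l1: "N (hlift (Fin q1)) = rscale (hlift (Fin q1)) l1"
    and l2: "N (hlift (Fin q2)) = rscale (hlift (Fin q2)) l2"
    using eigen S(1,2) by blast
  note diag = right_linear_diagonal_in_frame[OF N l1 l2]
  have frame_eigen: "\<exists>l. qmul l1 \<alpha> = qmul \<alpha> l \<and> qmul l2 \<beta> = qmul \<beta> l"
    if "p \<in> S" "hlift p = frame q1 q2 \<alpha> \<beta>" for p \<alpha> \<beta>
    using eigen[OF that(1)] diag that(2) by (simp add: rscale_frame frame_inject[OF q12])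
  obtain a b where ab: "hlift p3 = frame q1 q2 a b" "a \<noteq> 0" "b \<noteq> 0"
    using hlift_frame_nonzero_coords[OF q12 S(4,5)] by blast
  then obtain \<mu> where \<mu>: "qmul l1 a = qmul a \<mu>" "qmul l2 b = qmul b \<mu>"
    using frame_eigen[OF S(3)] by blast
  have "\<exists>r. \<mu> = r *\<^sub>R qone"
  proof (rule ccontr)
    assume "\<nexists>r. \<mu> = r *\<^sub>R qone"
    moreover have "qcomm \<mu> (qmul (qinv a) (qmul (qmul \<alpha> (qconj \<beta>)) (qconj (qinv b)))) = 0"
      if p: "p \<in> S" "hlift p = frame q1 q2 \<alpha> \<beta>" for p \<alpha> \<beta>
    proof -
      obtain l where "qmul l1 \<alpha> = qmul \<alpha> l" "qmul l2 \<beta> = qmul \<beta> l"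
        using frame_eigen[OF p] by blast
      then have "qcomm \<mu> (qmul (qmul (qinv a) \<alpha>) (qconj (qmul (qinv b) \<beta>))) = 0"
        using ab(2,3) \<mu> by (intro qcomm_intertwiner_product intertwiner_qinv_qmul)
      then show ?thesis
        by (simp add: qconj_qmul qmul_assoc)
    qed
    ultimately have "on_2sphere_or_2plane S"
      using ab(2,3) by (intro on_2sphere_or_2plane_if_frame_commutation
          [where A = "qinv a" and C = "qconj (qinv b)", OF q12 S(1,2)]) auto
    with nsph show False ..
  qed
  then obtain r where "\<mu> = r *\<^sub>R qone" ..
  then have "qmul l1 a = qmul (r *\<^sub>R qone) a" "qmul l2 b = qmul (r *\<^sub>R qone) b"
    using \<mu> by simp_all
  then have l: "l1 = r *\<^sub>R qone" "l2 = r *\<^sub>R qone"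
    using qmul_right_cancel ab(2,3) by blast+
  have scalar: "N v = rscale v (r *\<^sub>R qone)" for v
  proof -
    obtain \<alpha> \<beta> where "v = frame q1 q2 \<alpha> \<beta>"
      using frame_surj[OF q12] by blast
    then show ?thesis
      by (simp add: diag l rscale_frame)
  qed
  moreover have "r \<noteq> 0"
    using inj[of "hlift p3"] scalar[of "hlift p3"] hlift_nonzero
    by (auto simp: rscale_def zero_prod_def)
  ultimately show ?thesis
    using that[of "r *\<^sub>R qone"] by simp
qed

lemma obtain_two_Fin_and_third:
  assumes "3 \<le> card S"
  obtains q1 q2 p3 where "q1 \<noteq> q2" "Fin q1 \<in> S" "Fin q2 \<in> S" "p3 \<in> S" "p3 \<noteq> Fin q1" "p3 \<noteq> Fin q2"
proof -
  have "finite S"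
    using assms card.infinite by fastforce
  have "2 \<le> card (S - {Inf})"
    using assms card_Diff_singleton_if[of S Inf] by (auto split: if_splits)
  then obtain p1 where p1: "p1 \<in> S - {Inf}"
    by (metis all_not_in_conv card.empty not_numeral_le_zero)
  have "1 \<le> card (S - {Inf} - {p1})"
    using \<open>2 \<le> card (S - {Inf})\<close> p1 \<open>finite S\<close> by (simp add: card_Diff_singleton)
  then obtain p2 where p2: "p2 \<in> S - {Inf} - {p1}"
    by (metis all_not_in_conv card.empty not_one_le_zero)
  note p = p1 p2
  have "1 \<le> card (S - {p1} - {p2})"
    using assms p \<open>finite S\<close> by (simp add: card_Diff_singleton)
  then obtain p3 where "p3 \<in> S - {p1} - {p2}"
    by (metis all_not_in_conv card.empty not_one_le_zero)
  moreover obtain q1 q2 where "p1 = Fin q1" "p2 = Fin q2"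
    using p by (cases p1; cases p2) auto
  ultimately show ?thesis
    using p that by blast
qed

lemma flt_eq_if_agree_on_non_cospherical:
  assumes g: "gl2 a b c d" "gl2 A B C D"
    and S: "3 \<le> card S" "\<not> on_2sphere_or_2plane S"
    and agree: "\<And>p. p \<in> S \<Longrightarrow> flt a b c d p = flt A B C D p"
  shows "flt a b c d = flt A B C D"
proof -
  obtain a' b' c' d' A' B' C' D' where inv: "\<And>v. mat_act a' b' c' d' (mat_act a b c d v) = v"
    "\<And>v. mat_act A' B' C' D' (mat_act A B C D v) = v" "\<And>v. mat_act A B C D (mat_act A' B' C' D' v) = v"
    using gl2_inverse[OF g(1)] gl2_inverse[OF g(2)] by metis
  define N where "N v = mat_act A' B' C' D' (mat_act a b c d v)" for v
  have inj: "mat_act a b c d v \<noteq> 0" "mat_act A B C D v \<noteq> 0" "N v \<noteq> 0" if "v \<noteq> 0" for v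
    using that inv unfolding N_def by (metis mat_act_zero)+
  have eigen: "\<exists>l. N (hlift p) = rscale (hlift p) l" if "p \<in> S" for p
  proof -
    have "hproj (mat_act a b c d (hlift p)) = hproj (mat_act A B C D (hlift p))"
      using agree[OF that] by (simp add: flt_eq_hproj)
    then obtain l where "N (hlift p) = rscale (hlift p) l"
      unfolding N_def
      by (rule eigen_if_hproj_eq[of "mat_act A' B' C' D'" "mat_act A B C D" "mat_act a b c d",
            OF right_linear_mat_act inv(2) inj(1,2)[OF hlift_nonzero]])
    then show ?thesis ..
  qed
  obtain q1 q2 p3 where pts: "q1 \<noteq> q2" "Fin q1 \<in> S" "Fin q2 \<in> S" "p3 \<in> S" "p3 \<noteq> Fin q1" "p3 \<noteq> Fin q2"
    by (rule obtain_two_Fin_and_third[OF S(1)])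
  have "right_linear N"
    unfolding N_def by (rule right_linear_comp[OF right_linear_mat_act right_linear_mat_act])
  then obtain k where k: "k \<noteq> 0" "\<And>v. N v = rscale v k"
    using right_linear_scalar_if_eigen[OF _ _ pts eigen S(2)] inj(3) by blast
  have "mat_act a b c d v = rscale (mat_act A B C D v) k" for v
  proof -
    have "mat_act a b c d v = mat_act A B C D (N v)"
      by (simp add: N_def inv(3))
    also have "\<dots> = rscale (mat_act A B C D v) k"
      using right_linear_mat_act[of A B C D] unfolding right_linear_def k(2) by blast
    finally show ?thesis .
  qed
  then show ?thesis
    by (intro ext) (simp only: flt_eq_hproj hproj_rscale[OF k(1)])
qed

theorem mainTheorem4:
  fixes q :: "nat \<Rightarrow> hquat" and T T' :: "hquat \<Rightarrow> hquat"
  assumes "inj_on q {1..5}"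
    and "\<not> on_2sphere_or_2plane (q ` {1..5})"
    and "is_flt T" and "is_flt T'"
    and "\<forall>n\<in>{1..5}. T (q n) = T' (q n)"
  shows "T = T'"
proof -
  obtain a b c d A B C D where g: "gl2 a b c d" "gl2 A B C D"
    and T: "T = flt a b c d" "T' = flt A B C D"
    using assms(3,4) unfolding is_flt_def by blast
  have "3 \<le> card (q ` {1..5})"
    using card_image[OF assms(1)] by simp
  moreover have "flt a b c d p = flt A B C D p" if "p \<in> q ` {1..5}" for p
    using assms(5) that by (auto simp: T)
  ultimately show ?thesis
    unfolding T by (rule flt_eq_if_agree_on_non_cospherical[OF g _ assms(2)])
qed

end
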